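(* Let $G=(V,E)$ be a simple undirected graph with $V=[n]$, let $N=\binom n2$, and enumerate $\mathcal P_n=\{(i,j):1\le i<j\le n\}$ as $(i_k,j_k)$, $k\in[N]$. Let $U=[u_1,\dots,u_n]\in\mathrm{Lab}(G)$, $K=U^\top U$, and let $\tilde U\in\mathbb R^{d^2\times N}$ be the Kronecker product embedding of the node pairs, with $k$-th column $\tilde u_k=u_{i_k}\otimes u_{j_k}$. Let $C>0$ and $\mathcal H_{\tilde U}=\{w\mid w=\tilde U\beta,\ \beta\in\mathbb R^N,\ \|\beta\|_\infty\le C\}$. Then for any $p\in(0,1/2]$, $$R(\mathcal H_{\tilde U},\tilde U,p)\le C\lambda_1(K)\sqrt{2p},$$ where $\lambda_1(K)$ is the largest eigenvalue of $K$.
   Context: $\mathrm{Lab}(G)$ (orthonormal representations) is the set of matrices $U=[u_1,\dots,u_n]\in\mathbb R^{d\times n}$ (any $d$) with $\|u_i\|_2=1$ for all $i$ and $u_i^\top u_j=0$ whenever $i\ne j$ and $(i,j)\notin E$. $\otimes$ denotes the Kronecker product. Transductive Rademacher complexity: $R(\mathcal H,\tilde U,p)=\frac1N\mathbb E_\gamma\big[\sup_{h\in\mathcal H}\sum_{k=1}^N\gamma_k h^\top\tilde u_k\big]$, with $\gamma_k$ i.i.d. taking values $+1,-1,0$ with probabilities $p,p,1-2p$. *)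

theory Defs
  imports "HOL-Analysis.Analysis"
begin

definition simple_graph :: "nat \<Rightarrow> (nat \<times> nat) set \<Rightarrow> bool" where
  "simple_graph n E \<longleftrightarrow> E \<subseteq> {1..n} \<times> {1..n} \<and> sym E \<and> irrefl E"

definition Lab :: "nat \<Rightarrow> (nat \<times> nat) set \<Rightarrow> (nat \<Rightarrow> real^'d) set" where
  "Lab n E = {u. (\<forall>i\<in>{1..n}. norm (u i) = 1) \<and>
     (\<forall>i\<in>{1..n}. \<forall>j\<in>{1..n}. i \<noteq> j \<and> (i, j) \<notin> E \<longrightarrow> u i \<bullet> u j = 0)}"

definition kron :: "real^'d \<Rightarrow> real^'d \<Rightarrow> real^('d \<times> 'd)" where
  "kron x y = (\<chi> ab. x $ fst ab * y $ snd ab)"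

definition pairs :: "nat \<Rightarrow> (nat \<times> nat) set" where
  "pairs n = {(i, j). 1 \<le> i \<and> i < j \<and> j \<le> n}"

definition is_eigenvalue :: "nat \<Rightarrow> (nat \<Rightarrow> nat \<Rightarrow> real) \<Rightarrow> real \<Rightarrow> bool" where
  "is_eigenvalue n K l \<longleftrightarrow> (\<exists>x::nat \<Rightarrow> real. (\<exists>i\<in>{1..n}. x i \<noteq> 0) \<and>
      (\<forall>i\<in>{1..n}. (\<Sum>j=1..n. K i j * x j) = l * x i))"

definition largest_eigenvalue :: "nat \<Rightarrow> (nat \<Rightarrow> nat \<Rightarrow> real) \<Rightarrow> real" where
  "largest_eigenvalue n K = Max {l. is_eigenvalue n K l}"

text \<open>Transductive Rademacher complexity: columns indexed by the finite set P (N = card P),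
  gamma_k i.i.d. in {+1,-1,0} with probabilities p,p,1-2p; expectation as finite sum.\<close>
definition rademacher :: "'v::real_inner set \<Rightarrow> ('k \<Rightarrow> 'v) \<Rightarrow> 'k set \<Rightarrow> real \<Rightarrow> real" where
  "rademacher H ut P p = (1 / real (card P)) *
     (\<Sum>\<gamma> \<in> PiE P (\<lambda>_. {-1, 0, 1::real}).
        (\<Prod>k\<in>P. (if \<gamma> k = 0 then 1 - 2 * p else p)) *
        (SUP h\<in>H. \<Sum>k\<in>P. \<gamma> k * (h \<bullet> ut k)))"

end

theory Submission
  imports Defs
begin

(*
  Let mu be the maximum of sum_i (u_i . y)^2 = |U^T y|^2 over unit vectors y. At a maximiser y
  the quadratic form mu |v|^2 - |U^T v|^2 is positive semidefinite and vanishes, so y is an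
  eigenvector of U U^T for mu; hence mu is also an eigenvalue of K = U^T U, and mu <= lambda_1(K).
  Applying the dual bound |U x|^2 <= mu |x|^2 once in each tensor factor gives
  |sum_k beta_k (u_(i_k) (x) u_(j_k))| <= mu |beta|_2 <= C mu sqrt N.
  For a class of vectors of norm at most R, Cauchy-Schwarz bounds the supremum by
  R |sum_k gamma_k u~_k|, and Jensen's inequality with E |sum_k gamma_k u~_k|^2 = 2 p N (the u~_k
  are unit vectors and the gamma_k are uncorrelated) gives R(H, U~, p) <= R sqrt (2 p / N).
*)

section \<open>The frame operator and the largest eigenvalue of the Gram matrix\<close>

(* With U = [u_1, ..., u_n], frame_form n u y is |U^T y|^2 and frame_op n u is U U^T. *)

definition frame_form :: "nat \<Rightarrow> (nat \<Rightarrow> 'a::real_inner) \<Rightarrow> 'a \<Rightarrow> real" where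
  "frame_form n u y = (\<Sum>i=1..n. (u i \<bullet> y)\<^sup>2)"

definition frame_op :: "nat \<Rightarrow> (nat \<Rightarrow> 'a::real_inner) \<Rightarrow> 'a \<Rightarrow> 'a" where
  "frame_op n u y = (\<Sum>i=1..n. (u i \<bullet> y) *\<^sub>R u i)"

lemma inner_frame_op: "z \<bullet> frame_op n u y = (\<Sum>i=1..n. (u i \<bullet> y) * (u i \<bullet> z))"
  by (simp add: frame_op_def inner_sum_right inner_commute)

lemma frame_op_selfadjoint: "frame_op n u y \<bullet> z = y \<bullet> frame_op n u z"
  by (simp add: inner_commute[of "frame_op n u y"] inner_frame_op mult.commute)

lemma inner_frame_op_self: "y \<bullet> frame_op n u y = frame_form n u y"
  by (simp add: inner_frame_op frame_form_def power2_eq_square)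

lemma linear_frame_op: "linear (frame_op n u)"
  by (simp add: linear_iff frame_op_def inner_add_right scaleR_add_left sum.distrib scaleR_sum_right)

lemma frame_form_attains_max:
  fixes u :: "nat \<Rightarrow> 'a::euclidean_space"
  obtains y0 where "norm y0 = 1" "\<And>y. norm y = 1 \<Longrightarrow> frame_form n u y \<le> frame_form n u y0"
proof -
  have "sphere (0::'a) 1 \<noteq> {}" by simp
  moreover have "continuous_on (sphere 0 1) (frame_form n u)"
    unfolding frame_form_def by (intro continuous_intros)
  ultimately obtain y0 where "y0 \<in> sphere 0 1" "\<forall>y\<in>sphere 0 1. frame_form n u y \<le> frame_form n u y0"
    using continuous_attains_sup[OF compact_sphere] by blast
  then show thesis by (intro that) auto
qed

lemma frame_form_le_max:
  assumes "norm y0 = 1" and "\<And>y. norm y = 1 \<Longrightarrow> frame_form n u y \<le> frame_form n u y0"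
  shows "frame_form n u v \<le> frame_form n u y0 * (norm v)\<^sup>2"
proof (cases "v = 0")
  case True
  then show ?thesis by (simp add: frame_form_def)
next
  case False
  have "frame_form n u (v /\<^sub>R norm v) = frame_form n u v / (norm v)\<^sup>2"
    by (simp add: frame_form_def sum_divide_distrib field_simps)
  moreover have "frame_form n u (v /\<^sub>R norm v) \<le> frame_form n u y0"
    using False by (intro assms(2)) simp
  ultimately show ?thesis
    using False by (simp add: divide_le_eq mult.commute)
qed

lemma quadratic_nonneg_imp_linear_coeff_zero:
  fixes b c :: real
  assumes "\<And>t. 0 \<le> t * b + t\<^sup>2 * c"
  shows "b = 0"
proof (rule ccontr)
  assume "b \<noteq> 0"
  define a where "a = \<bar>c\<bar> + 1"
  have "a > 0" "c < a" by (auto simp: a_def)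
  have "(- b / a) * b + (- b / a)\<^sup>2 * c = b\<^sup>2 * (c - a) / a\<^sup>2"
    using \<open>a > 0\<close> by (simp add: field_simps power2_eq_square)
  also have "\<dots> < 0"
    using \<open>b \<noteq> 0\<close> \<open>a > 0\<close> \<open>c < a\<close> by (simp add: divide_neg_pos mult_pos_neg)
  finally show False
    using assms[of "- b / a"] by linarith
qed

lemma selfadjoint_psd_null_imp_kernel:
  fixes M :: "'a::real_inner \<Rightarrow> 'a"
  assumes "linear M" and selfadjoint: "\<And>x y. M x \<bullet> y = x \<bullet> M y"
    and psd: "\<And>v. 0 \<le> v \<bullet> M v" and null: "y \<bullet> M y = 0"
  shows "M y = 0"
proof -
  have "2 * (M y \<bullet> z) = 0" for z
  proof (rule quadratic_nonneg_imp_linear_coeff_zero)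
    fix t
    have "(y + t *\<^sub>R z) \<bullet> M (y + t *\<^sub>R z) = t * (2 * (M y \<bullet> z)) + t\<^sup>2 * (z \<bullet> M z)"
      using null selfadjoint[of z y]
      by (simp add: linear_add[OF \<open>linear M\<close>] linear_scale[OF \<open>linear M\<close>]
          inner_commute power2_eq_square algebra_simps)
    then show "0 \<le> t * (2 * (M y \<bullet> z)) + t\<^sup>2 * (z \<bullet> M z)"
      using psd by metis
  qed
  then have "M y \<bullet> M y = 0" by simp
  then show ?thesis by simp
qed

lemma frame_op_max_eigenvector:
  assumes "norm y0 = 1" and "\<And>y. norm y = 1 \<Longrightarrow> frame_form n u y \<le> frame_form n u y0"
  shows "frame_op n u y0 = frame_form n u y0 *\<^sub>R y0"
proof -
  define \<mu> where "\<mu> = frame_form n u y0"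
  define M where "M v = \<mu> *\<^sub>R v - frame_op n u v" for v
  have "linear M"
    by (simp add: M_def linear_iff linear_add[OF linear_frame_op] linear_scale[OF linear_frame_op]
        algebra_simps)
  moreover have "M x \<bullet> y = x \<bullet> M y" for x y
    by (simp add: M_def inner_diff_left inner_diff_right frame_op_selfadjoint)
  moreover have "0 \<le> v \<bullet> M v" for v
    using frame_form_le_max[OF assms, of v]
    by (simp add: M_def \<mu>_def inner_diff_right inner_frame_op_self power2_norm_eq_inner)
  moreover have "y0 \<bullet> M y0 = 0"
    using \<open>norm y0 = 1\<close>
    by (simp add: M_def \<mu>_def inner_diff_right inner_frame_op_self flip: power2_norm_eq_inner)
  ultimately have "M y0 = 0"
    by (rule selfadjoint_psd_null_imp_kernel)
  then show ?thesis by (simp add: M_def \<mu>_def)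
qed

lemma is_eigenvalue_gram_iff:
  assumes "l \<noteq> 0"
  shows "is_eigenvalue n (\<lambda>i j. u i \<bullet> u j) l \<longleftrightarrow> (\<exists>y. y \<noteq> 0 \<and> frame_op n u y = l *\<^sub>R y)"
proof
  assume "is_eigenvalue n (\<lambda>i j. u i \<bullet> u j) l"
  then obtain x where nz: "\<exists>i\<in>{1..n}. x i \<noteq> 0"
    and eq: "\<forall>i\<in>{1..n}. (\<Sum>j=1..n. (u i \<bullet> u j) * x j) = l * x i"
    unfolding is_eigenvalue_def by blast
  define y where "y = (\<Sum>j=1..n. x j *\<^sub>R u j)"
  have uy: "u i \<bullet> y = l * x i" if "i \<in> {1..n}" for i
    using eq that by (simp add: y_def inner_sum_right mult.commute)
  have "y \<noteq> 0"
  proof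
    assume "y = 0"
    with uy \<open>l \<noteq> 0\<close> have "\<forall>i\<in>{1..n}. x i = 0" by simp
    with nz show False by blast
  qed
  moreover have "frame_op n u y = l *\<^sub>R y"
    unfolding frame_op_def y_def scaleR_sum_right
    by (rule sum.cong) (use uy[unfolded y_def] in auto)
  ultimately show "\<exists>y. y \<noteq> 0 \<and> frame_op n u y = l *\<^sub>R y" by blast
next
  assume "\<exists>y. y \<noteq> 0 \<and> frame_op n u y = l *\<^sub>R y"
  then obtain y where "y \<noteq> 0" and y: "frame_op n u y = l *\<^sub>R y" by blast
  have "(\<Sum>j=1..n. (u i \<bullet> u j) * (u j \<bullet> y)) = l * (u i \<bullet> y)" for i
  proof -
    have "(\<Sum>j=1..n. (u i \<bullet> u j) * (u j \<bullet> y)) = u i \<bullet> frame_op n u y"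
      unfolding inner_frame_op by (simp add: inner_commute[of "u i"] mult.commute)
    then show ?thesis by (simp add: y)
  qed
  moreover have "\<exists>i\<in>{1..n}. u i \<bullet> y \<noteq> 0"
  proof (rule ccontr)
    assume "\<not> ?thesis"
    then have "frame_op n u y = 0"
      unfolding frame_op_def by (intro sum.neutral) auto
    with y \<open>y \<noteq> 0\<close> \<open>l \<noteq> 0\<close> show False by simp
  qed
  ultimately show "is_eigenvalue n (\<lambda>i j. u i \<bullet> u j) l"
    unfolding is_eigenvalue_def by (intro exI[of _ "\<lambda>j. u j \<bullet> y"]) simp
qed

lemma finite_eigenvalues_selfadjoint:
  fixes f :: "'a::euclidean_space \<Rightarrow> 'a"
  assumes selfadjoint: "\<And>x y. f x \<bullet> y = x \<bullet> f y"
  shows "finite {l. \<exists>y. y \<noteq> 0 \<and> f y = l *\<^sub>R y}"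
proof -
  define L where "L = {l. \<exists>y. y \<noteq> 0 \<and> f y = l *\<^sub>R y}"
  have "\<forall>l\<in>L. \<exists>y. y \<noteq> 0 \<and> f y = l *\<^sub>R y" by (simp add: L_def)
  then obtain v where v: "\<And>l. l \<in> L \<Longrightarrow> v l \<noteq> 0 \<and> f (v l) = l *\<^sub>R v l"
    by metis
  have "inj_on v L"
  proof (rule inj_onI)
    fix l m assume "l \<in> L" "m \<in> L" "v l = v m"
    then have "l *\<^sub>R v l = m *\<^sub>R v l" using v by metis
    then show "l = m" using v[OF \<open>l \<in> L\<close>] by simp
  qed
  moreover have "pairwise orthogonal (v ` L)"
  proof (rule pairwiseI, clarify)
    fix l m assume "l \<in> L" "m \<in> L" "v l \<noteq> v m"
    then have "l \<noteq> m" by blast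
    have "l * (v l \<bullet> v m) = v l \<bullet> f (v m)"
      using v[OF \<open>l \<in> L\<close>] selfadjoint[of "v l" "v m"] by simp
    also have "\<dots> = m * (v l \<bullet> v m)"
      using v[OF \<open>m \<in> L\<close>] by simp
    finally show "orthogonal (v l) (v m)"
      using \<open>l \<noteq> m\<close> by (simp add: orthogonal_def)
  qed
  moreover have "0 \<notin> v ` L" using v by auto
  ultimately have "finite (v ` L)"
    using pairwise_orthogonal_independent finiteI_independent by blast
  with \<open>inj_on v L\<close> show ?thesis
    by (simp add: L_def finite_image_iff)
qed

lemma finite_eigenvalues_gram:
  fixes u :: "nat \<Rightarrow> 'a::euclidean_space"
  shows "finite {l. is_eigenvalue n (\<lambda>i j. u i \<bullet> u j) l}"
proof (rule finite_subset)
  show "{l. is_eigenvalue n (\<lambda>i j. u i \<bullet> u j) l}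
      \<subseteq> insert 0 {l. \<exists>y. y \<noteq> 0 \<and> frame_op n u y = l *\<^sub>R y}"
    using is_eigenvalue_gram_iff by blast
  show "finite (insert 0 {l. \<exists>y. y \<noteq> 0 \<and> frame_op n u y = l *\<^sub>R y})"
    using finite_eigenvalues_selfadjoint frame_op_selfadjoint by blast
qed

lemma frame_form_le_largest_eigenvalue:
  fixes u :: "nat \<Rightarrow> 'a::euclidean_space"
  assumes "i \<in> {1..n}" and "u i \<noteq> 0"
  shows "0 < largest_eigenvalue n (\<lambda>i j. u i \<bullet> u j)"
    and "frame_form n u v \<le> largest_eigenvalue n (\<lambda>i j. u i \<bullet> u j) * (norm v)\<^sup>2"
proof -
  obtain y0 where y0: "norm y0 = 1"
    and max: "\<And>y. norm y = 1 \<Longrightarrow> frame_form n u y \<le> frame_form n u y0"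
    using frame_form_attains_max by blast
  define \<mu> where "\<mu> = frame_form n u y0"
  have bound: "frame_form n u w \<le> \<mu> * (norm w)\<^sup>2" for w
    unfolding \<mu>_def by (rule frame_form_le_max[OF y0 max])
  have "0 < (u i \<bullet> u i)\<^sup>2" using \<open>u i \<noteq> 0\<close> by simp
  also have "\<dots> \<le> frame_form n u (u i)"
    unfolding frame_form_def using \<open>i \<in> {1..n}\<close> by (intro member_le_sum) auto
  also have "\<dots> \<le> \<mu> * (norm (u i))\<^sup>2" by (rule bound)
  finally have "0 < \<mu>" by (simp add: zero_less_mult_iff)
  moreover have "frame_op n u y0 = \<mu> *\<^sub>R y0"
    unfolding \<mu>_def by (rule frame_op_max_eigenvector[OF y0 max])
  moreover have "y0 \<noteq> 0" using y0 by auto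
  ultimately have "is_eigenvalue n (\<lambda>i j. u i \<bullet> u j) \<mu>"
    by (subst is_eigenvalue_gram_iff) auto
  then have "\<mu> \<le> largest_eigenvalue n (\<lambda>i j. u i \<bullet> u j)"
    unfolding largest_eigenvalue_def using finite_eigenvalues_gram by (intro Max_ge) auto
  then show "0 < largest_eigenvalue n (\<lambda>i j. u i \<bullet> u j)"
    and "frame_form n u v \<le> largest_eigenvalue n (\<lambda>i j. u i \<bullet> u j) * (norm v)\<^sup>2"
    using \<open>0 < \<mu>\<close> order_trans[OF bound mult_right_mono] by auto
qed

section \<open>Kronecker products\<close>

lemma power2_norm_vec: "(norm (x :: real^'n))\<^sup>2 = (\<Sum>i\<in>UNIV. (x $ i)\<^sup>2)"
  unfolding power2_norm_eq_inner inner_vec_def by (simp add: power2_eq_square)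

lemma inner_kron: "kron a b \<bullet> kron c e = (a \<bullet> c) * (b \<bullet> e)"
proof -
  have "kron a b \<bullet> kron c e = (\<Sum>st\<in>UNIV. (a $ fst st * b $ snd st) * (c $ fst st * e $ snd st))"
    by (simp add: inner_vec_def kron_def)
  also have "\<dots> = (\<Sum>s\<in>UNIV. \<Sum>t\<in>UNIV. (a $ s * c $ s) * (b $ t * e $ t))"
    by (simp add: UNIV_Times_UNIV[symmetric] sum.cartesian_product del: UNIV_Times_UNIV)
      (simp add: algebra_simps case_prod_beta)
  also have "\<dots> = (a \<bullet> c) * (b \<bullet> e)"
    by (simp add: inner_vec_def sum_product)
  finally show ?thesis .
qed

lemma norm_kron: "norm (kron a b) = norm a * norm b"
  by (simp add: norm_eq_sqrt_inner inner_kron real_sqrt_mult)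

lemma kron_sum_left: "kron (\<Sum>i\<in>A. f i) b = (\<Sum>i\<in>A. kron (f i) b)"
  by (simp add: kron_def vec_eq_iff sum_distrib_right)

lemma kron_scaleR_left: "kron (c *\<^sub>R a) b = c *\<^sub>R kron a b"
  by (simp add: kron_def vec_eq_iff)

lemma norm_sum_scaleR_le_frame_bound:
  fixes u :: "nat \<Rightarrow> 'a::real_inner"
  assumes bound: "\<And>v. frame_form n u v \<le> \<mu> * (norm v)\<^sup>2" and "0 \<le> \<mu>"
  shows "(norm (\<Sum>i=1..n. x i *\<^sub>R u i))\<^sup>2 \<le> \<mu> * (\<Sum>i=1..n. (x i)\<^sup>2)"
proof -
  define v where "v = (\<Sum>i=1..n. x i *\<^sub>R u i)"
  have "(v \<bullet> v)\<^sup>2 = (\<Sum>i=1..n. x i * (u i \<bullet> v))\<^sup>2"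
    by (simp add: v_def inner_sum_left)
  also have "\<dots> \<le> (\<Sum>i=1..n. (x i)\<^sup>2) * frame_form n u v"
    unfolding frame_form_def by (rule Cauchy_Schwarz_ineq_sum)
  also have "\<dots> \<le> (\<Sum>i=1..n. (x i)\<^sup>2) * (\<mu> * (v \<bullet> v))"
    using bound[of v] by (intro mult_left_mono) (auto simp: power2_norm_eq_inner intro: sum_nonneg)
  finally have "(v \<bullet> v) * (v \<bullet> v) \<le> (\<mu> * (\<Sum>i=1..n. (x i)\<^sup>2)) * (v \<bullet> v)"
    by (simp add: power2_eq_square algebra_simps)
  then have "v \<bullet> v \<le> \<mu> * (\<Sum>i=1..n. (x i)\<^sup>2)"
    using \<open>0 \<le> \<mu>\<close> by (cases "v \<bullet> v = 0") (auto intro!: mult_nonneg_nonneg sum_nonneg)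
  then show ?thesis by (simp add: v_def power2_norm_eq_inner)
qed

lemma norm_sum_kron_le:
  fixes u w :: "nat \<Rightarrow> real^'d"
  assumes "\<And>v. frame_form n u v \<le> \<mu> * (norm v)\<^sup>2" and "0 \<le> \<mu>"
  shows "(norm (\<Sum>j=1..n. kron (w j) (u j)))\<^sup>2 \<le> \<mu> * (\<Sum>j=1..n. (norm (w j))\<^sup>2)"
proof -
  have entry: "(\<Sum>j=1..n. kron (w j) (u j)) $ (s, t) = (\<Sum>j=1..n. (w j $ s) *\<^sub>R u j) $ t" for s t
    by (simp add: kron_def)
  have "(norm (\<Sum>j=1..n. kron (w j) (u j)))\<^sup>2
      = (\<Sum>s\<in>UNIV. \<Sum>t\<in>UNIV. ((\<Sum>j=1..n. kron (w j) (u j)) $ (s, t))\<^sup>2)"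
    by (simp add: power2_norm_vec sum.cartesian_product UNIV_Times_UNIV[symmetric]
        del: UNIV_Times_UNIV)
  also have "\<dots> = (\<Sum>s\<in>UNIV. (norm (\<Sum>j=1..n. (w j $ s) *\<^sub>R u j))\<^sup>2)"
    unfolding entry power2_norm_vec by (rule refl)
  also have "\<dots> \<le> (\<Sum>s\<in>UNIV. \<mu> * (\<Sum>j=1..n. (w j $ s)\<^sup>2))"
    by (intro sum_mono norm_sum_scaleR_le_frame_bound[OF assms])
  also have "\<dots> = \<mu> * (\<Sum>j=1..n. (norm (w j))\<^sup>2)"
    by (simp add: power2_norm_vec sum_distrib_left sum.swap[of _ UNIV])
  finally show ?thesis .
qed

lemma sum_subset_Times:
  assumes "finite A" "finite B" "P \<subseteq> A \<times> B"
  shows "(\<Sum>k\<in>P. g k) = (\<Sum>i\<in>A. \<Sum>j\<in>B. if (i, j) \<in> P then g (i, j) else 0)"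
proof -
  have "(\<Sum>k\<in>A \<times> B. if k \<in> P then g k else 0) = (\<Sum>k\<in>A \<times> B \<inter> P. g k)"
    using assms by (simp add: sum.inter_restrict)
  then show ?thesis
    using \<open>P \<subseteq> A \<times> B\<close> by (simp add: Int_absorb1 sum.cartesian_product)
qed

lemma norm_sum_kron_pairs_le:
  fixes u :: "nat \<Rightarrow> real^'d" and \<beta> :: "nat \<times> nat \<Rightarrow> real"
  assumes bound: "\<And>v. frame_form n u v \<le> \<mu> * (norm v)\<^sup>2" and "0 \<le> \<mu>"
    and P: "P \<subseteq> {1..n} \<times> {1..n}"
  shows "(norm (\<Sum>k\<in>P. \<beta> k *\<^sub>R kron (u (fst k)) (u (snd k))))\<^sup>2 \<le> \<mu>\<^sup>2 * (\<Sum>k\<in>P. (\<beta> k)\<^sup>2)"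
proof -
  define B where "B i j = (if (i, j) \<in> P then \<beta> (i, j) else 0)" for i j
  define w where "w j = (\<Sum>i=1..n. B i j *\<^sub>R u i)" for j
  have "(\<Sum>k\<in>P. \<beta> k *\<^sub>R kron (u (fst k)) (u (snd k)))
      = (\<Sum>i=1..n. \<Sum>j=1..n. B i j *\<^sub>R kron (u i) (u j))"
    by (auto simp: sum_subset_Times[OF _ _ P] B_def intro!: sum.cong)
  also have "\<dots> = (\<Sum>j=1..n. kron (w j) (u j))"
    by (subst sum.swap) (simp add: w_def kron_sum_left kron_scaleR_left)
  finally have "(norm (\<Sum>k\<in>P. \<beta> k *\<^sub>R kron (u (fst k)) (u (snd k))))\<^sup>2
      \<le> \<mu> * (\<Sum>j=1..n. (norm (w j))\<^sup>2)"
    using norm_sum_kron_le[OF assms(1,2)] by simp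
  also have "\<dots> \<le> \<mu> * (\<Sum>j=1..n. \<mu> * (\<Sum>i=1..n. (B i j)\<^sup>2))"
    unfolding w_def
    by (intro mult_left_mono sum_mono norm_sum_scaleR_le_frame_bound[OF assms(1,2)] \<open>0 \<le> \<mu>\<close>)
  also have "\<dots> = \<mu>\<^sup>2 * (\<Sum>i=1..n. \<Sum>j=1..n. (B i j)\<^sup>2)"
    by (subst sum.swap) (simp add: sum_distrib_left power2_eq_square mult.assoc)
  also have "\<dots> = \<mu>\<^sup>2 * (\<Sum>k\<in>P. (\<beta> k)\<^sup>2)"
    by (auto simp: sum_subset_Times[OF _ _ P] B_def intro!: sum.cong)
  finally show ?thesis .
qed

lemma norm_sum_kron_pairs_le_card:
  fixes u :: "nat \<Rightarrow> real^'d" and \<beta> :: "nat \<times> nat \<Rightarrow> real"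
  assumes "\<And>v. frame_form n u v \<le> \<mu> * (norm v)\<^sup>2" and "0 \<le> \<mu>"
    and "P \<subseteq> {1..n} \<times> {1..n}" and "0 \<le> C" and "\<And>k. k \<in> P \<Longrightarrow> \<bar>\<beta> k\<bar> \<le> C"
  shows "norm (\<Sum>k\<in>P. \<beta> k *\<^sub>R kron (u (fst k)) (u (snd k))) \<le> C * \<mu> * sqrt (card P)"
proof (rule power2_le_imp_le)
  have "(\<beta> k)\<^sup>2 \<le> C\<^sup>2" if "k \<in> P" for k
  proof -
    have "\<bar>\<beta> k\<bar>\<^sup>2 \<le> C\<^sup>2" by (rule power_mono) (use assms(5)[OF that] in auto)
    then show ?thesis by simp
  qed
  then have "(\<Sum>k\<in>P. (\<beta> k)\<^sup>2) \<le> card P * C\<^sup>2"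
    by (rule sum_bounded_above)
  then have "\<mu>\<^sup>2 * (\<Sum>k\<in>P. (\<beta> k)\<^sup>2) \<le> \<mu>\<^sup>2 * (card P * C\<^sup>2)"
    by (rule mult_left_mono) simp
  also have "\<dots> = (C * \<mu> * sqrt (card P))\<^sup>2"
    by (simp add: power_mult_distrib)
  finally show "(norm (\<Sum>k\<in>P. \<beta> k *\<^sub>R kron (u (fst k)) (u (snd k))))\<^sup>2
      \<le> (C * \<mu> * sqrt (card P))\<^sup>2"
    using norm_sum_kron_pairs_le[OF assms(1-3)] by (rule order_trans[rotated])
  show "0 \<le> C * \<mu> * sqrt (card P)" using assms(2,4) by simp
qed

section \<open>Rademacher complexity of norm-bounded classes\<close>

abbreviation sign_vectors :: "'k set \<Rightarrow> ('k \<Rightarrow> real) set" where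
  "sign_vectors P \<equiv> PiE P (\<lambda>_. {-1, 0, 1})"

definition rademacher_prob :: "real \<Rightarrow> 'k set \<Rightarrow> ('k \<Rightarrow> real) \<Rightarrow> real" where
  "rademacher_prob p P \<gamma> = (\<Prod>k\<in>P. if \<gamma> k = 0 then 1 - 2 * p else p)"

lemma rademacher_prob_nonneg: "0 \<le> p \<Longrightarrow> p \<le> 1/2 \<Longrightarrow> 0 \<le> rademacher_prob p P \<gamma>"
  unfolding rademacher_prob_def by (intro prod_nonneg) auto

lemma sum_rademacher_prob: "finite P \<Longrightarrow> (\<Sum>\<gamma>\<in>sign_vectors P. rademacher_prob p P \<gamma>) = 1"
  unfolding rademacher_prob_def by (subst prod_sum_PiE[symmetric]) auto

lemma rademacher_second_moment:
  assumes "finite P" "k \<in> P" "l \<in> P"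
  shows "(\<Sum>\<gamma>\<in>sign_vectors P. rademacher_prob p P \<gamma> * (\<gamma> k * \<gamma> l)) = (if k = l then 2 * p else 0)"
proof -
  define f where
    "f m x = (if x = 0 then 1 - 2 * p else p) * (if m = k then x else 1) * (if m = l then x else 1)"
    for m and x :: real
  have "rademacher_prob p P \<gamma> * (\<gamma> k * \<gamma> l) = (\<Prod>m\<in>P. f m (\<gamma> m))" for \<gamma>
    using assms by (simp add: rademacher_prob_def f_def prod.distrib)
  then have "(\<Sum>\<gamma>\<in>sign_vectors P. rademacher_prob p P \<gamma> * (\<gamma> k * \<gamma> l))
      = (\<Sum>\<gamma>\<in>sign_vectors P. \<Prod>m\<in>P. f m (\<gamma> m))"
    by simp
  also have "\<dots> = (\<Prod>m\<in>P. \<Sum>x\<in>{-1, 0, 1}. f m x)"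
    by (rule prod_sum_PiE[symmetric]) (use assms in auto)
  also have "\<dots> = (if k = l then 2 * p else 0)"
  proof (cases "k = l")
    case True
    then have "(\<Sum>x\<in>{-1, 0, 1}. f m x) = (if m = k then 2 * p else 1)" for m
      by (simp add: f_def)
    with True assms show ?thesis by simp
  next
    case False
    then have "(\<Sum>x\<in>{-1, 0, 1}. f k x) = 0"
      by (simp add: f_def)
    with False assms show ?thesis by (auto intro: prod_zero)
  qed
  finally show ?thesis .
qed

lemma rademacher_expectation_norm_sq:
  fixes ut :: "'k \<Rightarrow> 'v::real_inner"
  assumes "finite P"
  shows "(\<Sum>\<gamma>\<in>sign_vectors P. rademacher_prob p P \<gamma> * (norm (\<Sum>k\<in>P. \<gamma> k *\<^sub>R ut k))\<^sup>2)
    = 2 * p * (\<Sum>k\<in>P. (norm (ut k))\<^sup>2)"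
proof -
  have "(\<Sum>\<gamma>\<in>sign_vectors P. rademacher_prob p P \<gamma> * (norm (\<Sum>k\<in>P. \<gamma> k *\<^sub>R ut k))\<^sup>2)
      = (\<Sum>k\<in>P. \<Sum>l\<in>P. (ut k \<bullet> ut l) *
          (\<Sum>\<gamma>\<in>sign_vectors P. rademacher_prob p P \<gamma> * (\<gamma> k * \<gamma> l)))"
    by (simp add: power2_norm_eq_inner inner_sum_left inner_sum_right sum_distrib_left
        sum.swap[of _ "sign_vectors P"] inner_commute mult_ac)
  also have "\<dots> = (\<Sum>k\<in>P. \<Sum>l\<in>P. (ut k \<bullet> ut l) * (if k = l then 2 * p else 0))"
    by (intro sum.cong refl) (simp add: rademacher_second_moment[OF assms])
  also have "\<dots> = 2 * p * (\<Sum>k\<in>P. (norm (ut k))\<^sup>2)"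
    using assms
    by (simp add: if_distrib sum_distrib_left power2_norm_eq_inner mult_ac cong: if_cong)
  finally show ?thesis .
qed

lemma weighted_mean_le_sqrt_weighted_mean_sq:
  fixes w g :: "'a \<Rightarrow> real"
  assumes "\<And>x. x \<in> A \<Longrightarrow> 0 \<le> w x" and "(\<Sum>x\<in>A. w x) = 1"
  shows "(\<Sum>x\<in>A. w x * g x) \<le> sqrt (\<Sum>x\<in>A. w x * (g x)\<^sup>2)"
proof (rule real_le_rsqrt)
  have "(\<Sum>x\<in>A. w x * g x)\<^sup>2 = (\<Sum>x\<in>A. sqrt (w x) * (sqrt (w x) * g x))\<^sup>2"
    using assms(1) by (simp add: mult.assoc[symmetric] cong: sum.cong)
  also have "\<dots> \<le> (\<Sum>x\<in>A. (sqrt (w x))\<^sup>2) * (\<Sum>x\<in>A. (sqrt (w x) * g x)\<^sup>2)"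
    by (rule Cauchy_Schwarz_ineq_sum)
  also have "\<dots> = (\<Sum>x\<in>A. w x * (g x)\<^sup>2)"
    using assms by (simp add: power_mult_distrib cong: sum.cong)
  finally show "(\<Sum>x\<in>A. w x * g x)\<^sup>2 \<le> (\<Sum>x\<in>A. w x * (g x)\<^sup>2)" .
qed

lemma SUP_inner_sum_le:
  fixes H :: "'v::real_inner set"
  assumes "H \<noteq> {}" and "\<And>h. h \<in> H \<Longrightarrow> norm h \<le> R"
  shows "(SUP h\<in>H. \<Sum>k\<in>P. \<gamma> k * (h \<bullet> ut k)) \<le> R * norm (\<Sum>k\<in>P. \<gamma> k *\<^sub>R ut k)"
proof (rule cSUP_least[OF \<open>H \<noteq> {}\<close>])
  fix h assume "h \<in> H"
  have "(\<Sum>k\<in>P. \<gamma> k * (h \<bullet> ut k)) = h \<bullet> (\<Sum>k\<in>P. \<gamma> k *\<^sub>R ut k)"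
    by (simp add: inner_sum_right)
  also have "\<dots> \<le> norm h * norm (\<Sum>k\<in>P. \<gamma> k *\<^sub>R ut k)"
    by (rule norm_cauchy_schwarz)
  also have "\<dots> \<le> R * norm (\<Sum>k\<in>P. \<gamma> k *\<^sub>R ut k)"
    using assms(2)[OF \<open>h \<in> H\<close>] by (rule mult_right_mono) simp
  finally show "(\<Sum>k\<in>P. \<gamma> k * (h \<bullet> ut k)) \<le> R * norm (\<Sum>k\<in>P. \<gamma> k *\<^sub>R ut k)" .
qed

lemma rademacher_le_norm_bound:
  fixes H :: "'v::real_inner set" and ut :: "'k \<Rightarrow> 'v"
  assumes "finite P" and unit: "\<And>k. k \<in> P \<Longrightarrow> norm (ut k) = 1"
    and "H \<noteq> {}" and bound: "\<And>h. h \<in> H \<Longrightarrow> norm h \<le> R"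
    and "0 \<le> p" "p \<le> 1/2"
  shows "rademacher H ut P p \<le> R * sqrt (2 * p / card P)"
proof (cases "P = {}")
  case True
  (* both sides are 0, by the convention x / 0 = 0 *)
  then show ?thesis by (simp add: rademacher_def)
next
  case False
  define N where "N = real (card P)"
  have "0 < N" using False \<open>finite P\<close> by (simp add: N_def card_gt_0_iff)
  have "0 \<le> R" using \<open>H \<noteq> {}\<close> bound norm_ge_zero order_trans by blast
  have "(\<Sum>\<gamma>\<in>sign_vectors P. rademacher_prob p P \<gamma> * (SUP h\<in>H. \<Sum>k\<in>P. \<gamma> k * (h \<bullet> ut k)))
      \<le> (\<Sum>\<gamma>\<in>sign_vectors P. rademacher_prob p P \<gamma> * (R * norm (\<Sum>k\<in>P. \<gamma> k *\<^sub>R ut k)))"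
    using \<open>H \<noteq> {}\<close> bound \<open>0 \<le> p\<close> \<open>p \<le> 1/2\<close>
    by (intro sum_mono mult_left_mono SUP_inner_sum_le rademacher_prob_nonneg) auto
  also have "\<dots> = R * (\<Sum>\<gamma>\<in>sign_vectors P. rademacher_prob p P \<gamma> * norm (\<Sum>k\<in>P. \<gamma> k *\<^sub>R ut k))"
    by (simp add: sum_distrib_left mult_ac)
  also have "\<dots> \<le> R * sqrt (\<Sum>\<gamma>\<in>sign_vectors P.
      rademacher_prob p P \<gamma> * (norm (\<Sum>k\<in>P. \<gamma> k *\<^sub>R ut k))\<^sup>2)"
    using \<open>0 \<le> R\<close> \<open>0 \<le> p\<close> \<open>p \<le> 1/2\<close> \<open>finite P\<close>
    by (intro mult_left_mono weighted_mean_le_sqrt_weighted_mean_sq rademacher_prob_nonneg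
        sum_rademacher_prob)
  also have "\<dots> = R * sqrt (2 * p * N)"
    using unit by (simp add: rademacher_expectation_norm_sq[OF \<open>finite P\<close>] N_def)
  finally have "rademacher H ut P p \<le> R * sqrt (2 * p * N) / N"
    using \<open>0 < N\<close> by (simp add: rademacher_def[folded rademacher_prob_def] N_def divide_right_mono)
  also have "\<dots> = R * sqrt (2 * p / N)"
    using \<open>0 < N\<close> by (simp add: real_sqrt_divide real_sqrt_mult field_simps)
  finally show ?thesis by (simp add: N_def)
qed

theorem lemma1:
  fixes n :: nat and E :: "(nat \<times> nat) set" and u :: "nat \<Rightarrow> real^'d"
    and C p :: real
  assumes "n \<ge> 1"
    and "simple_graph n E"
    and "u \<in> Lab n E"
    and "C > 0"
    and "0 < p" and "p \<le> 1/2"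
  shows "rademacher
           {w. \<exists>\<beta>::nat \<times> nat \<Rightarrow> real. (\<forall>k\<in>pairs n. \<bar>\<beta> k\<bar> \<le> C) \<and>
                 w = (\<Sum>k\<in>pairs n. \<beta> k *\<^sub>R kron (u (fst k)) (u (snd k)))}
           (\<lambda>k. kron (u (fst k)) (u (snd k))) (pairs n) p
         \<le> C * largest_eigenvalue n (\<lambda>i j. u i \<bullet> u j) * sqrt (2 * p)"
proof -
  define H where "H = {w. \<exists>\<beta>::nat \<times> nat \<Rightarrow> real. (\<forall>k\<in>pairs n. \<bar>\<beta> k\<bar> \<le> C) \<and>
                 w = (\<Sum>k\<in>pairs n. \<beta> k *\<^sub>R kron (u (fst k)) (u (snd k)))}"
  define \<mu> where "\<mu> = largest_eigenvalue n (\<lambda>i j. u i \<bullet> u j)"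
  define N where "N = card (pairs n)"
  have unit: "norm (u i) = 1" if "i \<in> {1..n}" for i
    using assms(3) that by (simp add: Lab_def)
  have "1 \<in> {1..n}" "u 1 \<noteq> 0" using \<open>n \<ge> 1\<close> unit[of 1] by auto
  then have "0 < \<mu>" and bound: "\<And>v. frame_form n u v \<le> \<mu> * (norm v)\<^sup>2"
    unfolding \<mu>_def by (rule frame_form_le_largest_eigenvalue)+
  have pairs: "pairs n \<subseteq> {1..n} \<times> {1..n}" by (auto simp: pairs_def)
  have "0 \<in> H"
    unfolding H_def using \<open>C > 0\<close> by (auto intro!: exI[of _ "\<lambda>_. 0"])
  moreover have "norm h \<le> C * \<mu> * sqrt N" if "h \<in> H" for h
    using that \<open>0 < \<mu>\<close> \<open>C > 0\<close> unfolding H_def N_def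
    by (auto intro!: norm_sum_kron_pairs_le_card[OF bound _ pairs])
  moreover have "finite (pairs n)" by (rule finite_subset[OF pairs]) simp
  moreover have "norm (kron (u (fst k)) (u (snd k))) = 1" if "k \<in> pairs n" for k
    using that pairs unit by (auto simp: norm_kron)
  ultimately have "rademacher H (\<lambda>k. kron (u (fst k)) (u (snd k))) (pairs n) p
      \<le> C * \<mu> * sqrt N * sqrt (2 * p / N)"
    unfolding N_def using assms(5,6) by (intro rademacher_le_norm_bound) auto
  also have "\<dots> \<le> C * \<mu> * sqrt (2 * p)"
  proof -
    have "sqrt N * sqrt (2 * p / N) \<le> sqrt (2 * p)"
      using \<open>0 < p\<close> by (cases "N = 0") (simp_all add: real_sqrt_mult[symmetric])
    with \<open>0 < \<mu>\<close> \<open>C > 0\<close> show ?thesis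
      by (simp add: mult.assoc mult_left_mono)
  qed
  finally show ?thesis unfolding H_def \<mu>_def .
qed

end
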